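(* If $(S,K,I)$ is a split graph, then the factor graph $\Phi(S)$ cannot contain an induced path $v_1v_2v_3v_4$ with $\sigma_{23}=1$.
   Context: A split graph $(S,K,I)$ is a graph $S$ together with a fixed partition $V(S)=K\dot\cup I$, where $K$ is a clique and $I$ is an independent set. For a vertex $v_i$ of $S$, $N_i$ denotes its open neighborhood in $S$ and $d_i=|N_i|$; $\eta_{uv}=|N_u\cap N_v|$. The factor graph $\Phi(S)$ is the loopless multigraph with vertex set $I$ in which, for distinct $u,v\in I$, there is one edge joining $u$ and $v$ for each 2-switch of $S$ acting on $u$ and $v$ (a 2-switch replaces edges $ab,cd$ with $ac,bd$ when $ab,cd\in E(S)$ and $ac,bd\notin E(S)$); equivalently, the multiplicity of $uv$ is $\sigma_{uv}=(d_u-\eta_{uv})(d_v-\eta_{uv})$, and $u,v$ are adjacent iff $\sigma_{uv}>0$; $\sigma_{ij}$ denotes $\sigma_{v_iv_j}$. An induced path in $\Phi(S)$ consists of distinct vertices with consecutive ones adjacent and no other pair adjacent (multiplicities ignored). *)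

theory Defs
  imports Main
begin

definition simple_graph :: "'a set \<Rightarrow> ('a \<Rightarrow> 'a \<Rightarrow> bool) \<Rightarrow> bool" where
  "simple_graph V E \<longleftrightarrow> finite V \<and> (\<forall>u v. E u v \<longrightarrow> u \<in> V \<and> v \<in> V)
     \<and> (\<forall>u v. E u v \<longrightarrow> E v u) \<and> (\<forall>v. \<not> E v v)"

definition split_graph :: "'a set \<Rightarrow> ('a \<Rightarrow> 'a \<Rightarrow> bool) \<Rightarrow> 'a set \<Rightarrow> 'a set \<Rightarrow> bool" where
  "split_graph V E K I \<longleftrightarrow> simple_graph V E \<and> K \<union> I = V \<and> K \<inter> I = {}
     \<and> (\<forall>u\<in>K. \<forall>v\<in>K. u \<noteq> v \<longrightarrow> E u v)
     \<and> (\<forall>u\<in>I. \<forall>v\<in>I. \<not> E u v)"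

definition nbhd :: "'a set \<Rightarrow> ('a \<Rightarrow> 'a \<Rightarrow> bool) \<Rightarrow> 'a \<Rightarrow> 'a set" where
  "nbhd V E v = {u \<in> V. E v u}"

definition deg :: "'a set \<Rightarrow> ('a \<Rightarrow> 'a \<Rightarrow> bool) \<Rightarrow> 'a \<Rightarrow> nat" where
  "deg V E v = card (nbhd V E v)"

definition eta :: "'a set \<Rightarrow> ('a \<Rightarrow> 'a \<Rightarrow> bool) \<Rightarrow> 'a \<Rightarrow> 'a \<Rightarrow> nat" where
  "eta V E u v = card (nbhd V E u \<inter> nbhd V E v)"

definition sigma :: "'a set \<Rightarrow> ('a \<Rightarrow> 'a \<Rightarrow> bool) \<Rightarrow> 'a \<Rightarrow> 'a \<Rightarrow> nat" where
  "sigma V E u v = (deg V E u - eta V E u v) * (deg V E v - eta V E u v)"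

text \<open>Adjacency in the factor graph Phi(S) (vertex set I, multiplicities ignored).\<close>
definition factor_adj :: "'a set \<Rightarrow> ('a \<Rightarrow> 'a \<Rightarrow> bool) \<Rightarrow> 'a set \<Rightarrow> 'a \<Rightarrow> 'a \<Rightarrow> bool" where
  "factor_adj V E I u v \<longleftrightarrow> u \<in> I \<and> v \<in> I \<and> u \<noteq> v \<and> sigma V E u v > 0"

definition factor_induced_P4 ::
  "'a set \<Rightarrow> ('a \<Rightarrow> 'a \<Rightarrow> bool) \<Rightarrow> 'a set \<Rightarrow> 'a \<Rightarrow> 'a \<Rightarrow> 'a \<Rightarrow> 'a \<Rightarrow> bool" where
  "factor_induced_P4 V E I v1 v2 v3 v4 \<longleftrightarrow>
     v1 \<in> I \<and> v2 \<in> I \<and> v3 \<in> I \<and> v4 \<in> I \<and> distinct [v1, v2, v3, v4]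
     \<and> factor_adj V E I v1 v2 \<and> factor_adj V E I v2 v3 \<and> factor_adj V E I v3 v4
     \<and> \<not> factor_adj V E I v1 v3 \<and> \<not> factor_adj V E I v1 v4 \<and> \<not> factor_adj V E I v2 v4"

end

theory Submission
  imports Defs
begin

text \<open>Since \<open>\<sigma>\<^sub>u\<^sub>v = |N\<^sub>u - N\<^sub>v| \<cdot> |N\<^sub>v - N\<^sub>u|\<close>, two vertices are non-adjacent in the factor
  graph exactly when their neighbourhoods are comparable under inclusion, and \<open>\<sigma>\<^sub>2\<^sub>3 = 1\<close>
  says that \<open>N\<^sub>3\<close> arises from \<open>N\<^sub>2\<close> by swapping one vertex \<open>a\<close> for another vertex \<open>b\<close>.
  A set comparable with \<open>N\<^sub>3\<close> but not with \<open>N\<^sub>2\<close> then either lies below \<open>N\<^sub>3\<close> and contains \<open>b\<close>,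
  or lies above \<open>N\<^sub>3\<close> and misses \<open>a\<close>; symmetrically for \<open>N\<^sub>4\<close> and \<open>N\<^sub>2\<close>. In each of the
  four resulting cases \<open>N\<^sub>1\<close> and \<open>N\<^sub>4\<close> are incomparable, contradicting that \<open>v\<^sub>1 v\<^sub>4\<close> is a
  non-edge.\<close>

lemma comparable_with_one_side_of_swap:
  assumes swap: "A - B = {a}" "B - A = {b}"
    and "\<not> C \<subseteq> A" "\<not> A \<subseteq> C" "C \<subseteq> B \<or> B \<subseteq> C"
  shows "(C \<subseteq> B \<and> b \<in> C) \<or> (B \<subseteq> C \<and> a \<notin> C)"
  using \<open>C \<subseteq> B \<or> B \<subseteq> C\<close>
proof
  assume "C \<subseteq> B"
  with \<open>\<not> C \<subseteq> A\<close> have "C \<inter> (B - A) \<noteq> {}"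
    by blast
  with \<open>C \<subseteq> B\<close> show ?thesis
    using swap(2) by simp
next
  assume "B \<subseteq> C"
  moreover have "A \<subseteq> B \<union> {a}"
    using swap(1) by blast
  ultimately show ?thesis
    using \<open>\<not> A \<subseteq> C\<close> by blast
qed

lemma no_induced_P4_of_comparability_with_swap:
  fixes N1 N2 N3 N4 :: "'a set"
  assumes swap: "N2 - N3 = {a}" "N3 - N2 = {b}"
    and incomparable: "\<not> N1 \<subseteq> N2" "\<not> N2 \<subseteq> N1" "\<not> N3 \<subseteq> N4" "\<not> N4 \<subseteq> N3"
    and comparable: "N1 \<subseteq> N3 \<or> N3 \<subseteq> N1" "N1 \<subseteq> N4 \<or> N4 \<subseteq> N1" "N2 \<subseteq> N4 \<or> N4 \<subseteq> N2"
  shows False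
proof -
  have N1: "(N1 \<subseteq> N3 \<and> b \<in> N1) \<or> (N3 \<subseteq> N1 \<and> a \<notin> N1)"
    using comparable_with_one_side_of_swap[OF swap] incomparable(1,2) comparable(1) .
  have N4: "(N4 \<subseteq> N2 \<and> a \<in> N4) \<or> (N2 \<subseteq> N4 \<and> b \<notin> N4)"
    using comparable_with_one_side_of_swap[OF swap(2,1)] incomparable(4,3) comparable(3)
    by blast
  have "a \<in> N2" "a \<notin> N3" "b \<in> N3" "b \<notin> N2"
    using swap by blast+
  with N1 N4 comparable(2) show False
    by blast
qed

lemma sigma_eq_card_Diff:
  assumes "finite V"
  shows "sigma V E u v = card (nbhd V E u - nbhd V E v) * card (nbhd V E v - nbhd V E u)"
proof -
  have card_Diff: "card (nbhd V E x - nbhd V E y) = deg V E x - eta V E x y" for x y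
  proof -
    have "finite (nbhd V E x \<inter> nbhd V E y)"
      using assms by (simp add: nbhd_def)
    then show ?thesis
      unfolding deg_def eta_def by (rule card_Diff_subset_Int)
  qed
  have "eta V E v u = eta V E u v"
    by (simp add: eta_def Int_commute)
  then show ?thesis
    by (simp add: sigma_def card_Diff)
qed

lemma sigma_pos_iff_incomparable:
  assumes "finite V"
  shows "sigma V E u v > 0 \<longleftrightarrow> \<not> nbhd V E u \<subseteq> nbhd V E v \<and> \<not> nbhd V E v \<subseteq> nbhd V E u"
proof -
  have "finite (nbhd V E x)" for x
    using assms by (simp add: nbhd_def)
  then show ?thesis
    using assms by (simp add: sigma_eq_card_Diff card_gt_0_iff)
qed

lemma sigma_eq_1_singleton_Diff:
  assumes "finite V" "sigma V E u v = 1"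
  obtains a b where "nbhd V E u - nbhd V E v = {a}" "nbhd V E v - nbhd V E u = {b}"
  using assms by (auto simp: sigma_eq_card_Diff card_1_singleton_iff)

lemma no_factor_induced_P4_with_sigma_1:
  assumes "finite V" and P4: "factor_induced_P4 V E I v1 v2 v3 v4"
  shows "sigma V E v2 v3 \<noteq> 1"
proof
  assume "sigma V E v2 v3 = 1"
  with \<open>finite V\<close> obtain a b
    where swap: "nbhd V E v2 - nbhd V E v3 = {a}" "nbhd V E v3 - nbhd V E v2 = {b}"
    by (rule sigma_eq_1_singleton_Diff)
  from P4 have "sigma V E v1 v2 > 0" "sigma V E v3 v4 > 0"
    and "\<not> sigma V E v1 v3 > 0" "\<not> sigma V E v1 v4 > 0" "\<not> sigma V E v2 v4 > 0"
    by (auto simp: factor_induced_P4_def factor_adj_def)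
  then show False
    using no_induced_P4_of_comparability_with_swap[OF swap, of "nbhd V E v1" "nbhd V E v4"]
    by (simp add: sigma_pos_iff_incomparable[OF \<open>finite V\<close>])
qed

theorem theorem4p1:
  fixes V K I :: "'a set" and E :: "'a \<Rightarrow> 'a \<Rightarrow> bool"
  assumes "split_graph V E K I"
  shows "\<not> (\<exists>v1 v2 v3 v4. factor_induced_P4 V E I v1 v2 v3 v4 \<and> sigma V E v2 v3 = 1)"
proof -
  have "finite V"
    using assms by (simp add: split_graph_def simple_graph_def)
  then show ?thesis
    by (auto dest: no_factor_induced_P4_with_sigma_1)
qed

end
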